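(* Let $L^x,L^y>0$, let $i\neq j$ be two boxes, each box $k\in\{i,j\}$ having center $(c^x_k,c^y_k)$, side lengths $(\ell^x_k,\ell^y_k)$ and given constants $lb^s_k>0$ ($s\in\{x,y\}$). Let $$Q^{lb}=\{(c_i,c_j,\ell_i,\ell_j)\in\mathbb{R}^8:\ \tfrac12\ell^s_k\le c^s_k\le L^s-\tfrac12\ell^s_k,\ \ell^s_k\ge lb^s_k\ \ \forall s\in\{x,y\},k\in\{i,j\}\}.$$ Consider binary variables $u^s_{p,q}$ for $s\in\{x,y\}$ and $(p,q)\in\{(i,j),(j,i)\}$, and let $E$ be the set of $(c_i,c_j,\ell_i,\ell_j,u)\in\mathbb{R}^8\times\{0,1\}^4$ such that $(c_i,c_j,\ell_i,\ell_j)\in Q^{lb}$, exactly one of the four variables $u^s_{p,q}$ equals $1$, and $u^s_{p,q}=1$ implies $\mathscr{B}_p\leftarrow_s\mathscr{B}_q$ (i.e. $E$ is the embedding $\operatorname{Em}(Q^{lb},D^4,U^4)$ where the unit vector with $u^s_{p,q}=1$ encodes the branch $\mathscr{B}_p\leftarrow_s\mathscr{B}_q$). Then $E$ equals the set of $(c_i,c_j,\ell_i,\ell_j,u)$ satisfying \begin{align*} &\tfrac12\ell^s_p+lb^s_q u^s_{q,p}\le c^s_p\le L^s-\tfrac12\ell^s_p-lb^s_q u^s_{p,q} &&\forall s\in\{x,y\},(p,q)\in\{(i,j),(j,i)\},\\ &c^s_p+\tfrac12\ell^s_p\le c^s_q-\tfrac12\ell^s_q+L^s(1-u^s_{p,q})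 &&\forall s\in\{x,y\},(p,q)\in\{(i,j),(j,i)\},\\ &\ell^s_p\ge lb^s_p &&\forall s\in\{x,y\},p\in\{i,j\},\\ &u^x_{i,j}+u^x_{j,i}+u^y_{i,j}+u^y_{j,i}=1, &&\\ &u^s_{p,q}\in\{0,1\} &&\forall s\in\{x,y\},(p,q)\in\{(i,j),(j,i)\}. \end{align*} Moreover, if $lb^s_i+lb^s_j<L^s$ for both $s\in\{x,y\}$, then this formulation is ideal: every extreme point of the polyhedron obtained by replacing $u^s_{p,q}\in\{0,1\}$ with $0\le u^s_{p,q}\le 1$ has all $u$-coordinates integral.
   Context: Box $\mathscr{B}_p$ precedes box $\mathscr{B}_q$ in direction $s\in\{x,y\}$, written $\mathscr{B}_p\leftarrow_s\mathscr{B}_q$, if $c^s_p+\tfrac12\ell^s_p\le c^s_q-\tfrac12\ell^s_q$. In the paper, $lb^s_k=\beta_k/ub^s_k$ with $ub^s_k=\min\{\sqrt{\alpha_k\beta_k},L^s\}$ for given area $\alpha_k>0$ and aspect ratio $\beta_k>0$. *)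

theory Defs
  imports "HOL-Analysis.Analysis"
begin

datatype box = BI | BJ
datatype dir = DX | DY

lemma UNIV_box: "(UNIV :: box set) = {BI, BJ}"
  using box.exhaust by auto

lemma UNIV_dir: "(UNIV :: dir set) = {DX, DY}"
  using dir.exhaust by auto

instance box :: finite
  by standard (simp add: UNIV_box)

instance dir :: finite
  by standard (simp add: UNIV_dir)

text \<open>The other box: for the ordered pair (p,q) in {(i,j),(j,i)} we have q = other p.\<close>
fun other :: "box \<Rightarrow> box" where
  "other BI = BJ"
| "other BJ = BI"

text \<open>Variables: centers c with c\$k\$s = c^s_k, side lengths l with l\$k\$s = l^s_k,
  and binary variables u with u\$s\$p = u^s_{p, other p}.
  A point is the triple (c, l, u), an element of R^8 x R^4.\<close>
type_synonym bvec = "real^dir^box"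
type_synonym uvec = "real^box^dir"
type_synonym point = "bvec \<times> bvec \<times> uvec"

definition precedes :: "bvec \<Rightarrow> bvec \<Rightarrow> dir \<Rightarrow> box \<Rightarrow> box \<Rightarrow> bool" where
  "precedes c l s p q \<longleftrightarrow> c$p$s + l$p$s / 2 \<le> c$q$s - l$q$s / 2"

definition Qlb :: "(dir \<Rightarrow> real) \<Rightarrow> (box \<Rightarrow> dir \<Rightarrow> real) \<Rightarrow> (bvec \<times> bvec) set" where
  "Qlb L lb = {(c, l). \<forall>s k. l$k$s / 2 \<le> c$k$s \<and> c$k$s \<le> L s - l$k$s / 2 \<and> l$k$s \<ge> lb k s}"

definition Emb :: "(dir \<Rightarrow> real) \<Rightarrow> (box \<Rightarrow> dir \<Rightarrow> real) \<Rightarrow> point set" where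
  "Emb L lb = {(c, l, u). (c, l) \<in> Qlb L lb \<and> (\<forall>s p. u$s$p \<in> {0, 1})
      \<and> (\<exists>!sp. u$(fst sp)$(snd sp) = 1)
      \<and> (\<forall>s p. u$s$p = 1 \<longrightarrow> precedes c l s p (other p))}"

definition lin_constraints :: "(dir \<Rightarrow> real) \<Rightarrow> (box \<Rightarrow> dir \<Rightarrow> real) \<Rightarrow> point \<Rightarrow> bool" where
  "lin_constraints L lb x \<longleftrightarrow> (case x of (c, l, u) \<Rightarrow>
      (\<forall>s p. l$p$s / 2 + lb (other p) s * u$s$(other p) \<le> c$p$s
           \<and> c$p$s \<le> L s - l$p$s / 2 - lb (other p) s * u$s$p)
    \<and> (\<forall>s p. c$p$s + l$p$s / 2 \<le> c$(other p)$s - l$(other p)$s / 2 + L s * (1 - u$s$p))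
    \<and> (\<forall>s p. l$p$s \<ge> lb p s)
    \<and> u$DX$BI + u$DX$BJ + u$DY$BI + u$DY$BJ = 1)"

definition formulation :: "(dir \<Rightarrow> real) \<Rightarrow> (box \<Rightarrow> dir \<Rightarrow> real) \<Rightarrow> point set" where
  "formulation L lb = {x. lin_constraints L lb x \<and> (\<forall>s p. (snd (snd x))$s$p \<in> {0, 1})}"

definition relaxation :: "(dir \<Rightarrow> real) \<Rightarrow> (box \<Rightarrow> dir \<Rightarrow> real) \<Rightarrow> point set" where
  "relaxation L lb = {x. lin_constraints L lb x \<and> (\<forall>s p. 0 \<le> (snd (snd x))$s$p \<and> (snd (snd x))$s$p \<le> 1)}"

end

theory Submission
  imports Defs
begin

text \<open>In a fixed direction the constraints only couple the two boxes through the two variables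
  of that direction. Homogenising them, the polyhedron of one direction is the sum of three
  pieces, one for each of the branches "i before j", "j before i" and "no separation in this
  direction": in gap coordinates (free space to the left and right of each box) the gaps can be
  distributed greedily among the three pieces. Dehomogenising, every relaxed point is a convex
  combination of four binary points, one for each choice of the active variable; the binary
  point of branch (s, p) uses the branch piece in direction s and the "no separation" piece in
  the other direction, whose weight is exactly the total weight of that direction's branches.
  So the relaxation is the convex hull of the mixed-integer formulation, and its extreme
  points are binary. For binary u the formulation reduces to the disjunction directly.\<close>

lemma all_box: "(\<forall>p::box. P p) \<longleftrightarrow> P BI \<and> P BJ"
  by (metis box.exhaust)

lemma all_dir: "(\<forall>s::dir. P s) \<longleftrightarrow> P DX \<and> P DY"
  by (metis dir.exhaust)

lemma UNIV_dir_box: "(UNIV :: (dir \<times> box) set) = {(DX, BI), (DX, BJ), (DY, BI), (DY, BJ)}"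
proof (rule UNIV_eq_I)
  fix k :: "dir \<times> box"
  obtain s p where "k = (s, p)"
    by (cases k)
  then show "k \<in> {(DX, BI), (DX, BJ), (DY, BI), (DY, BJ)}"
    by (cases s; cases p) auto
qed

text \<open>The constraints of one direction s, homogenised by w: p = (c_i, l_i, c_j, l_j),
  \<alpha> = u_{i,j}, \<beta> = u_{j,i}, mi = lb_i, mj = lb_j; the formulation itself is the case w = 1.\<close>

definition slice_cone ::
    "real \<Rightarrow> real \<Rightarrow> real \<Rightarrow> real \<Rightarrow> real \<times> real \<times> real \<times> real \<Rightarrow> real \<Rightarrow> real \<Rightarrow> bool" where
  "slice_cone L mi mj w p \<alpha> \<beta> \<longleftrightarrow> (case p of (ci, li, cj, lj) \<Rightarrow>
     li/2 + mj*\<beta> \<le> ci \<and> ci \<le> w*L - li/2 - mj*\<alpha> \<and> lj/2 + mi*\<alpha> \<le> cj \<and> cj \<le> w*L - lj/2 - mi*\<beta>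
     \<and> ci + li/2 \<le> cj - lj/2 + L*(w - \<alpha>) \<and> cj + lj/2 \<le> ci - li/2 + L*(w - \<beta>)
     \<and> li \<ge> w*mi \<and> lj \<ge> w*mj)"

text \<open>The same cone in gap coordinates: ei = c_i - l_i/2 and fi = w L - c_i - l_i/2 are the free
  space to the left and to the right of box i, and likewise ej, fj for box j.\<close>

definition gap_cone ::
    "real \<Rightarrow> real \<Rightarrow> real \<Rightarrow> real \<Rightarrow> real \<Rightarrow> real \<Rightarrow> real \<Rightarrow> real \<Rightarrow> real \<Rightarrow> real \<Rightarrow> bool" where
  "gap_cone L mi mj w \<alpha> \<beta> ei fi ej fj \<longleftrightarrow>
     \<beta>*mj \<le> ei \<and> \<alpha>*mj \<le> fi \<and> \<alpha>*mi \<le> ej \<and> \<beta>*mi \<le> fj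
     \<and> ei + fi \<le> w*(L - mi) \<and> ej + fj \<le> w*(L - mj) \<and> \<alpha>*L \<le> ej + fi \<and> \<beta>*L \<le> ei + fj"

lemma slice_cone_iff_gap_cone:
  "slice_cone L mi mj w (ci, li, cj, lj) \<alpha> \<beta> \<longleftrightarrow>
     gap_cone L mi mj w \<alpha> \<beta> (ci - li/2) (w*L - ci - li/2) (cj - lj/2) (w*L - cj - lj/2)"
  unfolding slice_cone_def gap_cone_def by (auto simp: algebra_simps)

lemma gap_cone_decompose:
  fixes L mi mj a b ei fi ej fj :: real
  assumes m: "0 \<le> mi" "0 \<le> mj" "mi + mj \<le> L" and ab: "0 \<le> a" "0 \<le> b" "a + b \<le> 1"
    and gap: "gap_cone L mi mj 1 a b ei fi ej fj"
  obtains Aei Afi Aej Afj Bei Bfi Bej Bfj Gei Gfi Gej Gfj where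
    "gap_cone L mi mj a a 0 Aei Afi Aej Afj" "gap_cone L mi mj b 0 b Bei Bfi Bej Bfj"
    "gap_cone L mi mj (1 - a - b) 0 0 Gei Gfi Gej Gfj"
    "ei = Aei + Bei + Gei" "fi = Afi + Bfi + Gfi" "ej = Aej + Bej + Gej" "fj = Afj + Bfj + Gfj"
proof -
  define g where "g = 1 - a - b"
  define Ai Aj Bi Bj Gi Gj where "Ai = a*(L - mi)" "Aj = a*(L - mj)" "Bi = b*(L - mi)"
    "Bj = b*(L - mj)" "Gi = g*(L - mi)" "Gj = g*(L - mj)"
  have sums: "Ai + Bi + Gi = L - mi" "Aj + Bj + Gj = L - mj"
    unfolding Ai_Aj_Bi_Bj_Gi_Gj_def g_def by (simp_all add: algebra_simps)
  have nonneg: "0 \<le> Ai" "0 \<le> Aj" "0 \<le> Bi" "0 \<le> Bj" "0 \<le> Gi" "0 \<le> Gj"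
    using m ab unfolding Ai_Aj_Bi_Bj_Gi_Gj_def g_def by simp_all
  have lower: "a*mj \<le> Ai" "a*mi \<le> Aj" "b*mj \<le> Bi" "b*mi \<le> Bj"
    using m ab unfolding Ai_Aj_Bi_Bj_Gi_Gj_def by (simp_all add: mult_left_mono)
  have scaled_L: "a*L = Ai + a*mi" "a*L = Aj + a*mj" "b*L = Bi + b*mi" "b*L = Bj + b*mj"
    unfolding Ai_Aj_Bi_Bj_Gi_Gj_def by (simp_all add: algebra_simps)
  have "0 \<le> a*(L - mi - mj)" "0 \<le> b*(L - mi - mj)"
    using m ab by simp_all
  then have joint: "a*L \<le> Ai + Aj" "b*L \<le> Bi + Bj"
    unfolding Ai_Aj_Bi_Bj_Gi_Gj_def by (simp_all add: algebra_simps)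
  \<comment> \<open>Greedy filling: the branch "i before j" first takes what it can of the gaps fi, ej
    between the boxes, "j before i" of ei, fj; each then takes what it can of the remaining
    two gaps, and the rest is left to the "no separation" piece.\<close>
  define Afi Aej Bei Bfj where "Afi = min fi Ai" "Aej = min ej Aj" "Bei = min ei Bi" "Bfj = min fj Bj"
  define Aei Bfi Afj Bej where "Aei = min (ei - Bei) (Ai - Afi)" "Bfi = min (fi - Afi) (Bi - Bei)"
    "Afj = min (fj - Bfj) (Aj - Aej)" "Bej = min (ej - Aej) (Bj - Bfj)"
  have "gap_cone L mi mj a a 0 Aei Afi Aej Afj" "gap_cone L mi mj b 0 b Bei Bfi Bej Bfj"
    "gap_cone L mi mj g 0 0 (ei - Aei - Bei) (fi - Afi - Bfi) (ej - Aej - Bej) (fj - Afj - Bfj)"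
    using gap sums nonneg lower scaled_L joint
    unfolding gap_cone_def Afi_Aej_Bei_Bfj_def Aei_Bfi_Afj_Bej_def Ai_Aj_Bi_Bj_Gi_Gj_def[symmetric]
    by (auto simp: min_def)
  then show ?thesis
    using that unfolding g_def by fastforce
qed

lemma slice_cone_decompose:
  assumes m: "0 \<le> mi" "0 \<le> mj" "mi + mj \<le> L" and ab: "0 \<le> a" "0 \<le> b" "a + b \<le> 1"
    and p: "slice_cone L mi mj 1 p a b"
  obtains PA PB PG where "slice_cone L mi mj a PA a 0" "slice_cone L mi mj b PB 0 b"
    "slice_cone L mi mj (1 - a - b) PG 0 0" "p = PA + PB + PG"
proof -
  obtain ci li cj lj where p_eq: "p = (ci, li, cj, lj)"
    by (cases p) auto
  let ?slice = "\<lambda>w e f e' f'. ((e + w*L - f)/2, w*L - e - f, (e' + w*L - f')/2, w*L - e' - f')"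
  have slice_cone_gaps: "slice_cone L mi mj w (?slice w e f e' f') \<alpha> \<beta> \<longleftrightarrow> gap_cone L mi mj w \<alpha> \<beta> e f e' f'"
    for w e f e' f' \<alpha> \<beta>
    by (simp add: slice_cone_iff_gap_cone field_simps)
  from p have "gap_cone L mi mj 1 a b (ci - li/2) (L - ci - li/2) (cj - lj/2) (L - cj - lj/2)"
    by (simp add: p_eq slice_cone_iff_gap_cone)
  then obtain Aei Afi Aej Afj Bei Bfi Bej Bfj Gei Gfi Gej Gfj where
    A: "gap_cone L mi mj a a 0 Aei Afi Aej Afj" and B: "gap_cone L mi mj b 0 b Bei Bfi Bej Bfj"
    and G: "gap_cone L mi mj (1 - a - b) 0 0 Gei Gfi Gej Gfj"
    and sums: "ci - li/2 = Aei + Bei + Gei" "L - ci - li/2 = Afi + Bfi + Gfi"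
      "cj - lj/2 = Aej + Bej + Gej" "L - cj - lj/2 = Afj + Bfj + Gfj"
    by (rule gap_cone_decompose[OF m ab])
  have "p = ?slice a Aei Afi Aej Afj + ?slice b Bei Bfi Bej Bfj + ?slice (1 - a - b) Gei Gfi Gej Gfj"
    using sums by (simp add: p_eq field_simps)
  with A B G that show ?thesis
    unfolding slice_cone_gaps[symmetric] by blast
qed

lemma slice_cone_add:
  assumes "slice_cone L mi mj w p \<alpha> \<beta>" "slice_cone L mi mj w' p' \<alpha>' \<beta>'"
  shows "slice_cone L mi mj (w + w') (p + p') (\<alpha> + \<alpha>') (\<beta> + \<beta>')"
  using assms by (cases p, cases p') (auto simp: slice_cone_def algebra_simps add_divide_distrib)

lemma slice_cone_scaleR:
  assumes "0 \<le> t" "slice_cone L mi mj w p \<alpha> \<beta>"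
  shows "slice_cone L mi mj (t*w) (t *\<^sub>R p) (t*\<alpha>) (t*\<beta>)"
proof -
  obtain ci li cj lj where p: "p = (ci, li, cj, lj)"
    by (cases p) auto
  have "t*(li/2 + mj*\<beta>) \<le> t*ci" "t*ci \<le> t*(w*L - li/2 - mj*\<alpha>)"
    "t*(lj/2 + mi*\<alpha>) \<le> t*cj" "t*cj \<le> t*(w*L - lj/2 - mi*\<beta>)"
    "t*(ci + li/2) \<le> t*(cj - lj/2 + L*(w - \<alpha>))" "t*(cj + lj/2) \<le> t*(ci - li/2 + L*(w - \<beta>))"
    "t*(w*mi) \<le> t*li" "t*(w*mj) \<le> t*lj"
    using assms unfolding p slice_cone_def by (auto intro: mult_left_mono)
  then show ?thesis
    unfolding p slice_cone_def by (simp add: algebra_simps)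
qed

lemma slice_cone_zero:
  assumes "0 \<le> mi" "0 \<le> mj" "slice_cone L mi mj 0 p 0 0"
  shows "p = 0"
  using assms by (cases p) (auto simp: slice_cone_def zero_prod_def)

lemma slice_cone_branch_nonempty:
  assumes "0 \<le> mi" "0 \<le> mj" "mi + mj \<le> L" "(\<alpha>, \<beta>) \<in> {(1, 0), (0, 1), (0, 0)}"
  shows "\<exists>p. slice_cone L mi mj 1 p \<alpha> \<beta>"
proof -
  have "slice_cone L mi mj 1 (if \<beta> = 1 then (L - mi/2, mi, mj/2, mj) else (mi/2, mi, L - mj/2, mj)) \<alpha> \<beta>"
    using assms by (auto simp: slice_cone_def)
  then show ?thesis ..
qed

lemma slice_cone_dehomogenize:
  assumes m: "0 \<le> mi" "0 \<le> mj" "mi + mj \<le> L" and branch: "(\<alpha>, \<beta>) \<in> {(1, 0), (0, 1), (0, 0)}"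
    and t: "0 \<le> t" and H: "slice_cone L mi mj t H (t*\<alpha>) (t*\<beta>)"
  shows "\<exists>P. slice_cone L mi mj 1 P \<alpha> \<beta> \<and> H = t *\<^sub>R P"
proof (cases "t = 0")
  case True
  with m H have "H = 0"
    by (auto intro: slice_cone_zero)
  with True slice_cone_branch_nonempty[OF m branch] show ?thesis
    by auto
next
  case False
  with t have "t > 0" by simp
  with slice_cone_scaleR[of "1/t", OF _ H] have "slice_cone L mi mj 1 ((1/t) *\<^sub>R H) \<alpha> \<beta>"
    by simp
  moreover have "H = t *\<^sub>R ((1/t) *\<^sub>R H)"
    using \<open>t > 0\<close> by simp
  ultimately show ?thesis
    by blast
qed

lemma slice_cone_convex_decompose:
  assumes m: "0 \<le> mi" "0 \<le> mj" "mi + mj \<le> L" and ab: "0 \<le> a" "0 \<le> b" "a + b \<le> 1"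
    and p: "slice_cone L mi mj 1 p a b"
  obtains PA PB PG where "slice_cone L mi mj 1 PA 1 0" "slice_cone L mi mj 1 PB 0 1"
    "slice_cone L mi mj 1 PG 0 0" "p = a *\<^sub>R PA + b *\<^sub>R PB + (1 - a - b) *\<^sub>R PG"
proof -
  obtain HA HB HG where HA: "slice_cone L mi mj a HA a 0" and HB: "slice_cone L mi mj b HB 0 b"
    and HG: "slice_cone L mi mj (1 - a - b) HG 0 0" and p_eq: "p = HA + HB + HG"
    by (rule slice_cone_decompose[OF m ab p])
  have HA': "slice_cone L mi mj a HA (a*1) (a*0)" and HB': "slice_cone L mi mj b HB (b*0) (b*1)"
    and HG': "slice_cone L mi mj (1 - a - b) HG ((1 - a - b)*0) ((1 - a - b)*0)"
    using HA HB HG by simp_all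
  obtain PA where "slice_cone L mi mj 1 PA 1 0" "HA = a *\<^sub>R PA"
    using slice_cone_dehomogenize[OF m _ ab(1) HA'] by blast
  moreover obtain PB where "slice_cone L mi mj 1 PB 0 1" "HB = b *\<^sub>R PB"
    using slice_cone_dehomogenize[OF m _ ab(2) HB'] by blast
  moreover obtain PG where "slice_cone L mi mj 1 PG 0 0" "HG = (1 - a - b) *\<^sub>R PG"
    using slice_cone_dehomogenize[OF m _ _ HG'] ab(3) by fastforce
  ultimately show ?thesis
    using p_eq that by blast
qed

definition slice :: "point \<Rightarrow> dir \<Rightarrow> real \<times> real \<times> real \<times> real" where
  "slice x s = (fst x $ BI $ s, fst (snd x) $ BI $ s, fst x $ BJ $ s, fst (snd x) $ BJ $ s)"

definition point_of_slices :: "(dir \<Rightarrow> real \<times> real \<times> real \<times> real) \<Rightarrow> uvec \<Rightarrow> point" where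
  "point_of_slices P u =
     ((\<chi> k s. if k = BI then fst (P s) else fst (snd (snd (P s)))),
      (\<chi> k s. if k = BI then fst (snd (P s)) else snd (snd (snd (P s)))), u)"

lemma slice_point_of_slices [simp]: "slice (point_of_slices P u) s = P s"
  by (simp add: slice_def point_of_slices_def)

lemma snd_snd_point_of_slices [simp]: "snd (snd (point_of_slices P u)) = u"
  by (simp add: point_of_slices_def)

lemma slice_add [simp]: "slice (x + y) s = slice x s + slice y s"
  by (simp add: slice_def)

lemma slice_scaleR [simp]: "slice (t *\<^sub>R x) s = t *\<^sub>R slice x s"
  by (simp add: slice_def)

lemma slice_sum [simp]: "slice (\<Sum>k\<in>A. f k) s = (\<Sum>k\<in>A. slice (f k) s)"
  by (simp add: slice_def prod_eq_iff fst_sum snd_sum)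

lemma point_eqI:
  assumes "\<And>s. slice x s = slice y s" "snd (snd x) = snd (snd y)"
  shows "x = y"
proof -
  have "fst x = fst y" "fst (snd x) = fst (snd y)"
    using assms(1) by (auto simp: slice_def vec_eq_iff all_box)
  with assms(2) show ?thesis
    by (simp add: prod_eq_iff)
qed

lemma lin_constraints_iff_slice_cone:
  "lin_constraints L lb x \<longleftrightarrow>
     (\<forall>s. slice_cone (L s) (lb BI s) (lb BJ s) 1 (slice x s) (snd (snd x) $ s $ BI) (snd (snd x) $ s $ BJ))
     \<and> snd (snd x) $ DX $ BI + snd (snd x) $ DX $ BJ + snd (snd x) $ DY $ BI + snd (snd x) $ DY $ BJ = 1"
  by (cases x) (auto simp: lin_constraints_def slice_cone_def slice_def all_box)

lemma convex_relaxation: "convex (relaxation L lb)"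
proof (rule convexI)
  fix x y :: point and t t' :: real
  assume x: "x \<in> relaxation L lb" and y: "y \<in> relaxation L lb"
    and t: "0 \<le> t" "0 \<le> t'" "t + t' = 1"
  let ?K = "\<lambda>s w p \<alpha> \<beta>. slice_cone (L s) (lb BI s) (lb BJ s) w p \<alpha> \<beta>"
  let ?u = "\<lambda>z s p. snd (snd z) $ s $ p"
  have "?K s (t*1 + t'*1) (t *\<^sub>R slice x s + t' *\<^sub>R slice y s)
      (t * ?u x s BI + t' * ?u y s BI) (t * ?u x s BJ + t' * ?u y s BJ)" for s
    using x y t by (intro slice_cone_add slice_cone_scaleR) (auto simp: relaxation_def lin_constraints_iff_slice_cone)
  moreover have "0 \<le> t * ?u x s p + t' * ?u y s p \<and> t * ?u x s p + t' * ?u y s p \<le> 1" for s p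
    using x y t by (auto simp: relaxation_def intro!: convex_bound_le)
  moreover have "t * ?u x DX BI + t' * ?u y DX BI + (t * ?u x DX BJ + t' * ?u y DX BJ)
      + (t * ?u x DY BI + t' * ?u y DY BI) + (t * ?u x DY BJ + t' * ?u y DY BJ) = 1"
  proof -
    have "?u x DX BI + ?u x DX BJ + ?u x DY BI + ?u x DY BJ = 1"
      "?u y DX BI + ?u y DX BJ + ?u y DY BI + ?u y DY BJ = 1"
      using x y by (auto simp: relaxation_def lin_constraints_iff_slice_cone)
    then have "t * (?u x DX BI + ?u x DX BJ + ?u x DY BI + ?u x DY BJ)
        + t' * (?u y DX BI + ?u y DX BJ + ?u y DY BI + ?u y DY BJ) = 1"
      using t by simp
    then show ?thesis
      by (simp add: algebra_simps)
  qed
  ultimately show "t *\<^sub>R x + t' *\<^sub>R y \<in> relaxation L lb"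
    using t by (simp add: relaxation_def lin_constraints_iff_slice_cone)
qed

definition branch_point ::
    "(dir \<Rightarrow> real \<times> real \<times> real \<times> real) \<Rightarrow> (dir \<Rightarrow> real \<times> real \<times> real \<times> real) \<Rightarrow>
     (dir \<Rightarrow> real \<times> real \<times> real \<times> real) \<Rightarrow> dir \<times> box \<Rightarrow> point" where
  "branch_point PA PB PG k = point_of_slices
     (\<lambda>s. if s \<noteq> fst k then PG s else if snd k = BI then PA s else PB s)
     (\<chi> s p. if (s, p) = k then 1 else 0)"

lemma branch_point_in_formulation:
  assumes "\<And>s. slice_cone (L s) (lb BI s) (lb BJ s) 1 (PA s) 1 0"
    "\<And>s. slice_cone (L s) (lb BI s) (lb BJ s) 1 (PB s) 0 1"
    "\<And>s. slice_cone (L s) (lb BI s) (lb BJ s) 1 (PG s) 0 0"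
  shows "branch_point PA PB PG k \<in> formulation L lb"
proof -
  obtain s p where "k = (s, p)"
    by (cases k)
  with assms show ?thesis
    unfolding formulation_def lin_constraints_iff_slice_cone branch_point_def
    by (cases s; cases p) (auto simp: all_dir all_box)
qed

lemma sum_branch_points:
  fixes u :: uvec
  assumes u_sum: "u$DX$BI + u$DX$BJ + u$DY$BI + u$DY$BJ = 1"
    and slices: "\<And>s. slice x s = u$s$BI *\<^sub>R PA s + u$s$BJ *\<^sub>R PB s + (1 - u$s$BI - u$s$BJ) *\<^sub>R PG s"
    and u: "snd (snd x) = u"
  shows "(\<Sum>k\<in>UNIV. u $ fst k $ snd k *\<^sub>R branch_point PA PB PG k) = x"
proof (rule point_eqI)
  fix s
  \<comment> \<open>The weight of PG s is carried by the two branches of the other direction.\<close>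
  have rest: "1 - u$s$BI - u$s$BJ = (if s = DX then u$DY$BI + u$DY$BJ else u$DX$BI + u$DX$BJ)"
    using u_sum by (cases s) auto
  show "slice (\<Sum>k\<in>UNIV. u $ fst k $ snd k *\<^sub>R branch_point PA PB PG k) s = slice x s"
    using slices[of s, unfolded rest]
    by (cases s) (simp_all add: UNIV_dir_box branch_point_def algebra_simps)
next
  show "snd (snd (\<Sum>k\<in>UNIV. u $ fst k $ snd k *\<^sub>R branch_point PA PB PG k)) = snd (snd x)"
    by (simp add: snd_sum UNIV_dir_box branch_point_def vec_eq_iff all_dir all_box u)
qed

lemma relaxation_subset_convex_hull_formulation:
  assumes lb: "\<forall>k s. 0 \<le> lb k s" and fit: "\<forall>s. lb BI s + lb BJ s \<le> L s"
  shows "relaxation L lb \<subseteq> convex hull formulation L lb"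
proof
  fix x assume x: "x \<in> relaxation L lb"
  let ?K = "\<lambda>s p \<alpha> \<beta>. slice_cone (L s) (lb BI s) (lb BJ s) 1 p \<alpha> \<beta>"
  define u where "u = snd (snd x)"
  have K: "\<And>s. ?K s (slice x s) (u$s$BI) (u$s$BJ)"
    and u_sum: "u$DX$BI + u$DX$BJ + u$DY$BI + u$DY$BJ = 1"
    and u_bounds: "\<And>s p. 0 \<le> u$s$p" "\<And>s p. u$s$p \<le> 1"
    using x unfolding relaxation_def lin_constraints_iff_slice_cone u_def by auto
  have "\<exists>PA PB PG. ?K s PA 1 0 \<and> ?K s PB 0 1 \<and> ?K s PG 0 0 \<and>
      slice x s = u$s$BI *\<^sub>R PA + u$s$BJ *\<^sub>R PB + (1 - u$s$BI - u$s$BJ) *\<^sub>R PG" for s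
  proof -
    have "u$s$BI + u$s$BJ \<le> 1"
      using u_sum u_bounds(1)[of DX] u_bounds(1)[of DY] by (cases s) (smt (verit))+
    then show ?thesis
      using slice_cone_convex_decompose[OF _ _ _ _ _ _ K] lb fit u_bounds by metis
  qed
  then obtain PA PB PG where pieces: "?K s (PA s) 1 0" "?K s (PB s) 0 1" "?K s (PG s) 0 0"
    "slice x s = u$s$BI *\<^sub>R PA s + u$s$BJ *\<^sub>R PB s + (1 - u$s$BI - u$s$BJ) *\<^sub>R PG s" for s
    by metis
  then have branch_points_in: "branch_point PA PB PG k \<in> formulation L lb" for k
    by (simp add: branch_point_in_formulation)
  have "(\<Sum>k\<in>UNIV. u $ fst k $ snd k *\<^sub>R branch_point PA PB PG k) \<in> convex hull formulation L lb"
    using branch_points_in u_sum u_bounds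
    by (intro convex_sum convex_convex_hull) (auto simp: UNIV_dir_box hull_inc)
  moreover have "(\<Sum>k\<in>UNIV. u $ fst k $ snd k *\<^sub>R branch_point PA PB PG k) = x"
    using sum_branch_points[OF u_sum pieces(4)] u_def by simp
  ultimately show "x \<in> convex hull formulation L lb"
    by simp
qed

lemma convex_hull_formulation:
  assumes "\<forall>k s. 0 \<le> lb k s" "\<forall>s. lb BI s + lb BJ s \<le> L s"
  shows "convex hull formulation L lb = relaxation L lb"
proof
  have "v \<in> {0, 1} \<Longrightarrow> 0 \<le> v \<and> v \<le> (1::real)" for v
    by auto
  then have "formulation L lb \<subseteq> relaxation L lb"
    unfolding formulation_def relaxation_def by blast
  then show "convex hull formulation L lb \<subseteq> relaxation L lb"
    using convex_relaxation by (rule hull_minimal)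
  show "relaxation L lb \<subseteq> convex hull formulation L lb"
    by (rule relaxation_subset_convex_hull_formulation[OF assms])
qed

lemma ex1_eq_one_iff_sum_eq_one:
  fixes f :: "'a::finite \<Rightarrow> real"
  assumes "\<forall>k. f k \<in> {0, 1}"
  shows "(\<exists>!k. f k = 1) \<longleftrightarrow> (\<Sum>k\<in>UNIV. f k) = 1"
proof -
  have "(\<Sum>k\<in>UNIV. f k) = (\<Sum>k\<in>UNIV. of_bool (f k = 1))"
    using assms by (intro sum.cong) auto
  then have "(\<Sum>k\<in>UNIV. f k) = real (card {k. f k = 1})"
    by simp
  then have "(\<Sum>k\<in>UNIV. f k) = 1 \<longleftrightarrow> (\<exists>k. {k. f k = 1} = {k})"
    by (simp add: card_1_singleton_iff[symmetric])
  then show ?thesis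
    by (auto simp: Ex1_def)
qed

lemma slice_cone_binary_iff:
  assumes "\<alpha> \<in> {0, 1}" "\<beta> \<in> {0, 1}" "0 < mi" "0 < mj"
  shows "slice_cone L mi mj 1 (ci, li, cj, lj) \<alpha> \<beta> \<longleftrightarrow>
    li/2 \<le> ci \<and> ci \<le> L - li/2 \<and> mi \<le> li \<and> lj/2 \<le> cj \<and> cj \<le> L - lj/2 \<and> mj \<le> lj
    \<and> (\<alpha> = 1 \<longrightarrow> ci + li/2 \<le> cj - lj/2) \<and> (\<beta> = 1 \<longrightarrow> cj + lj/2 \<le> ci - li/2)"
  using assms unfolding slice_cone_def by (auto simp: field_simps)

lemma Emb_eq_formulation:
  assumes lb: "\<forall>k s. 0 < lb k s"
  shows "Emb L lb = formulation L lb"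
proof (rule set_eqI)
  fix x :: point
  obtain c l u where x: "x = (c, l, u)"
    by (cases x)
  show "x \<in> Emb L lb \<longleftrightarrow> x \<in> formulation L lb"
  proof (cases "\<forall>s p. u$s$p \<in> {0, 1}")
    case False
    then show ?thesis
      by (auto simp: x Emb_def formulation_def)
  next
    case True
    then have "(\<exists>!k. u $ fst k $ snd k = 1) \<longleftrightarrow> u$DX$BI + u$DX$BJ + u$DY$BI + u$DY$BJ = 1"
      using ex1_eq_one_iff_sum_eq_one[of "\<lambda>k. u $ fst k $ snd k"] by (simp add: UNIV_dir_box add.assoc)
    moreover have "(c, l) \<in> Qlb L lb \<and> (\<forall>s p. u$s$p = 1 \<longrightarrow> precedes c l s p (other p)) \<longleftrightarrow>
        (\<forall>s. slice_cone (L s) (lb BI s) (lb BJ s) 1 (slice x s) (u$s$BI) (u$s$BJ))"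
      using True lb by (auto simp: x slice_def slice_cone_binary_iff Qlb_def precedes_def all_box)
    ultimately show ?thesis
      using True by (auto simp: x Emb_def formulation_def lin_constraints_iff_slice_cone)
  qed
qed

theorem theorem5p1:
  fixes L :: "dir \<Rightarrow> real" and lb :: "box \<Rightarrow> dir \<Rightarrow> real"
  assumes L_pos: "\<forall>s. L s > 0"
    and lb_pos: "\<forall>k s. lb k s > 0"
  shows "Emb L lb = formulation L lb \<and>
         ((\<forall>s. lb BI s + lb BJ s < L s) \<longrightarrow>
           (\<forall>x. x extreme_point_of relaxation L lb \<longrightarrow>
              (\<forall>s p. (snd (snd x))$s$p \<in> {0, 1})))"
proof (intro conjI impI allI)
  show "Emb L lb = formulation L lb"
    using lb_pos by (rule Emb_eq_formulation)
next
  fix x s p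
  assume fit: "\<forall>s. lb BI s + lb BJ s < L s" and x: "x extreme_point_of relaxation L lb"
  have "convex hull formulation L lb = relaxation L lb"
    using lb_pos fit by (intro convex_hull_formulation) (auto simp: less_imp_le)
  with x have "x \<in> formulation L lb"
    using extreme_point_of_convex_hull by metis
  then show "(snd (snd x))$s$p \<in> {0, 1}"
    by (simp add: formulation_def)
qed

end
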